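(* Let $x(t)=x^{(N)}(t)$ be the Markov process with generator $L=L_0+L_s$ defined in the context, with initial condition $x(0)$ satisfying $\mathsf E|M(x(0))|<\infty$, and let $\mu_N(t):=\mathsf E\,M(x(t))$. Then for every fixed $t>0$, $\lim_{N\to\infty}\frac{\mu_N(t)-\mu_N(0)}{t}=\alpha a$. Moreover, for every function $t(N)\to\infty$, $\frac{\mu_N(t(N))-\mu_N(0)}{t(N)}\to\alpha a$ as $N\to\infty$.
   Context: Fix an integer $k\ge2$ and integers $k_1,\dots,k_l\ge2$ with $k_1+\dots+k_l=k$ (fixed independently of $N$). For $N\ge k$, let $\mathcal I$ be the set of ordered $k$-tuples $(i_1,\dots,i_k)$ of pairwise distinct elements of $\{1,\dots,N\}$. For $(i_1,\dots,i_k)\in\mathcal I$ split it into consecutive blocks $\Gamma_1,\dots,\Gamma_l$ of lengths $k_1,\dots,k_l$ and let $g_j$ be the first element of $\Gamma_j$. The synchronization map $J^{(i_1,\dots,i_k)}:\mathbb{R}^N\to\mathbb{R}^N$, $x\mapsto y$, is $y_m=x_m$ if $m\notin\{i_1,\dots,i_k\}$ and $y_m=x_{g_j}$ if $m\in\Gamma_j$. Let $\alpha>0,\delta>0$ (independent of $N$), and let $\rho$ be a probability measure on $\mathbb{R}$ with compact support, $b_2:=\int z^2\rho(dz)>0$, $a:=\int z\rho(dz)$. The process $x(t)=(x_1(t),\dots,x_N(t))\in\mathbb{R}^N$ is the continuous-time Markov jump process with generator $L=L_0+L_s$, $(L_0f)(x)=\alpha\sum_{i=1}^N\int\big(f(x+ze_i)-f(x)\big)\rho(dz)$,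 $(L_sf)(x)=\frac{\delta}{N(N-1)\cdots(N-k+1)}\sum_{(i_1,\dots,i_k)\in\mathcal I}\big(f(J^{(i_1,\dots,i_k)}x)-f(x)\big)$: each particle independently jumps $x_i\to x_i+z$, $z\sim\rho$, at rate $\alpha$, and independently at rate $\delta$ a uniformly random tuple of $\mathcal I$ is chosen and the configuration is replaced by $J^{(i_1,\dots,i_k)}x$. $M(x)=\frac1N\sum_{m=1}^N x_m$. *)

theory Defs
  imports "HOL-Probability.Probability"
begin

text \<open>States of the N-particle system: functions nat => real, of which only the
  coordinates 1..N are used.\<close>

text \<open>Offset (0-based) of the first position of the block containing position p,
  when a tuple is split into consecutive blocks of lengths ks.\<close>
fun bstart :: "nat list \<Rightarrow> nat \<Rightarrow> nat" where
  "bstart [] p = 0"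
| "bstart (c # cs) p = (if p < c then 0 else c + bstart cs (p - c))"

text \<open>Synchronization map J^(i_1,...,i_k): coordinate m = i_p gets the value of the
  first element g_j of the block containing position p.\<close>
definition sync :: "nat list \<Rightarrow> nat list \<Rightarrow> (nat \<Rightarrow> real) \<Rightarrow> (nat \<Rightarrow> real)" where
  "sync ks is x = (\<lambda>m. if m \<in> set is
       then x (is ! bstart ks (THE p. p < length is \<and> is ! p = m))
       else x m)"

definition tuples :: "nat \<Rightarrow> nat \<Rightarrow> nat list set" where
  "tuples N k = {is. length is = k \<and> distinct is \<and> set is \<subseteq> {1..N}}"

definition meanM :: "nat \<Rightarrow> (nat \<Rightarrow> real) \<Rightarrow> real" where
  "meanM N x = (\<Sum>m = 1..N. x m) / real N"

definition gen0 :: "real \<Rightarrow> real measure \<Rightarrow> nat \<Rightarrow> ((nat \<Rightarrow> real) \<Rightarrow> real) \<Rightarrow> (nat \<Rightarrow> real) \<Rightarrow> real" where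
  "gen0 \<alpha> \<rho> N f x = \<alpha> * (\<Sum>i = 1..N. \<integral>z. (f (x(i := x i + z)) - f x) \<partial>\<rho>)"

definition gens :: "real \<Rightarrow> nat list \<Rightarrow> nat \<Rightarrow> ((nat \<Rightarrow> real) \<Rightarrow> real) \<Rightarrow> (nat \<Rightarrow> real) \<Rightarrow> real" where
  "gens \<delta> ks N f x = \<delta> / (\<Prod>j<sum_list ks. real (N - j)) *
      (\<Sum>is \<in> tuples N (sum_list ks). f (sync ks is x) - f x)"

definition gen :: "real \<Rightarrow> real \<Rightarrow> real measure \<Rightarrow> nat list \<Rightarrow> nat \<Rightarrow> ((nat \<Rightarrow> real) \<Rightarrow> real) \<Rightarrow> (nat \<Rightarrow> real) \<Rightarrow> real" where
  "gen \<alpha> \<delta> \<rho> ks N f x = gen0 \<alpha> \<rho> N f x + gens \<delta> ks N f x"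

text \<open>Uniformization: total jump rate bounded by lam = alpha N + delta; the one-step
  operator of the embedded chain is K f = f + L f / lam, and the transition semigroup is
  P_t f = sum_n exp(-lam t) (lam t)^n / n! K^n f,  i.e.  E_x f(x(t)) = P_t f (x).\<close>
definition unif_rate :: "real \<Rightarrow> real \<Rightarrow> nat \<Rightarrow> real" where
  "unif_rate \<alpha> \<delta> N = \<alpha> * real N + \<delta>"

definition stepK :: "real \<Rightarrow> real \<Rightarrow> real measure \<Rightarrow> nat list \<Rightarrow> nat \<Rightarrow> ((nat \<Rightarrow> real) \<Rightarrow> real) \<Rightarrow> (nat \<Rightarrow> real) \<Rightarrow> real" where
  "stepK \<alpha> \<delta> \<rho> ks N f x = f x + gen \<alpha> \<delta> \<rho> ks N f x / unif_rate \<alpha> \<delta> N"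

definition semigroup :: "real \<Rightarrow> real \<Rightarrow> real measure \<Rightarrow> nat list \<Rightarrow> nat \<Rightarrow> real \<Rightarrow> ((nat \<Rightarrow> real) \<Rightarrow> real) \<Rightarrow> (nat \<Rightarrow> real) \<Rightarrow> real" where
  "semigroup \<alpha> \<delta> \<rho> ks N t f x =
     (\<Sum>n. exp (- unif_rate \<alpha> \<delta> N * t) * (unif_rate \<alpha> \<delta> N * t) ^ n / fact n *
          ((stepK \<alpha> \<delta> \<rho> ks N ^^ n) f) x)"

text \<open>mu_N(t) = E M(x(t)) when x(0) has law mu0.\<close>
definition meanproc :: "real \<Rightarrow> real \<Rightarrow> real measure \<Rightarrow> nat list \<Rightarrow> (nat \<Rightarrow> real) measure \<Rightarrow> nat \<Rightarrow> real \<Rightarrow> real" where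
  "meanproc \<alpha> \<delta> \<rho> ks mu0 N t = (\<integral>x. semigroup \<alpha> \<delta> \<rho> ks N t (meanM N) x \<partial>mu0)"

end

theory Submission imports Defs begin

text \<open>Synchronization only copies coordinates inside the chosen tuple, and averaged over all
  tuples the value copied to position \<open>p\<close> (that of position \<open>bstart ks p\<close>) has the same
  distribution as the value it overwrites.  Hence the synchronization part of the generator
  annihilates the empirical mean \<open>M\<close>, while the free part adds \<open>\<alpha> a\<close>: \<open>L (M + c) = \<alpha> a\<close>.
  Iterating the uniformized one-step operator gives \<open>K\<^sup>n M = M + n \<alpha> a / \<lambda>\<close>, and averaging over
  the Poisson number of steps gives \<open>\<mu>\<^sub>N(t) = \<mu>\<^sub>N(0) + \<alpha> a t\<close> exactly, for every \<open>N\<close>.\<close>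

lemma bstart_le: "bstart ks p \<le> p"
proof (induction ks arbitrary: p)
  case (Cons c ks)
  then show ?case using Cons.IH[of "p - c"] by (simp; arith)
qed simp

definition swap_nth :: "nat \<Rightarrow> nat \<Rightarrow> 'a list \<Rightarrow> 'a list" where
  "swap_nth q r xs = xs[q := xs ! r, r := xs ! q]"

lemma
  assumes "xs \<in> tuples N k" "q < k" "r < k"
  shows swap_nth_swap_nth: "swap_nth q r (swap_nth q r xs) = xs"
    and swap_nth_in_tuples: "swap_nth q r xs \<in> tuples N k"
    and nth_swap_nth: "swap_nth q r xs ! r = xs ! q"
proof -
  have len: "length xs = k" using assms(1) by (simp add: tuples_def)
  show "swap_nth q r (swap_nth q r xs) = xs"
    using len assms by (intro nth_equalityI) (auto simp: nth_list_update swap_nth_def)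
  show "swap_nth q r xs \<in> tuples N k"
    using assms len by (auto simp: tuples_def distinct_swap set_swap swap_nth_def)
  show "swap_nth q r xs ! r = xs ! q"
    using len assms by (auto simp: nth_list_update swap_nth_def)
qed

lemma sum_tuples_nth_indep:
  assumes "q < k" "r < k"
  shows "(\<Sum>is\<in>tuples N k. f (is ! q)) = (\<Sum>is\<in>tuples N k. f (is ! r))"
  by (rule sum.reindex_bij_witness[where i = "swap_nth q r" and j = "swap_nth q r"])
     (use assms swap_nth_swap_nth swap_nth_in_tuples nth_swap_nth in auto)

lemma meanM_sync_diff:
  assumes "is \<in> tuples N (sum_list ks)"
  shows "meanM N (sync ks is x) - meanM N x
     = (\<Sum>p<sum_list ks. x (is ! bstart ks p) - x (is ! p)) / real N"
proof -
  let ?k = "sum_list ks"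
  have len: "length is = ?k" and dist: "distinct is" and sub: "set is \<subseteq> {1..N}"
    using assms by (auto simp: tuples_def)
  have sync_nth: "sync ks is x (is ! p) = x (is ! bstart ks p)" if "p < ?k" for p
  proof -
    have "(THE p'. p' < length is \<and> is ! p' = is ! p) = p"
      by (rule the_equality) (use that len dist in \<open>auto simp: nth_eq_iff_index_eq\<close>)
    then show ?thesis using that len by (simp add: sync_def)
  qed
  have "meanM N (sync ks is x) - meanM N x = (\<Sum>m = 1..N. sync ks is x m - x m) / real N"
    by (simp add: meanM_def sum_subtractf diff_divide_distrib)
  also have "(\<Sum>m = 1..N. sync ks is x m - x m) = (\<Sum>m\<in>set is. sync ks is x m - x m)"
    by (rule sum.mono_neutral_right) (use sub in \<open>auto simp: sync_def\<close>)
  also have "\<dots> = (\<Sum>m\<in>nth is ` {..<?k}. sync ks is x m - x m)"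
    using len by (simp add: nth_image lessThan_atLeast0)
  also have "\<dots> = (\<Sum>p<?k. sync ks is x (is ! p) - x (is ! p))"
    using len dist by (simp add: sum.reindex inj_on_nth)
  also have "\<dots> = (\<Sum>p<?k. x (is ! bstart ks p) - x (is ! p))"
    by (simp add: sync_nth)
  finally show ?thesis .
qed

lemma sum_tuples_meanM_sync_diff:
  "(\<Sum>is\<in>tuples N (sum_list ks). meanM N (sync ks is x) - meanM N x) = 0"
proof -
  let ?k = "sum_list ks" and ?T = "tuples N (sum_list ks)"
  have "(\<Sum>is\<in>?T. meanM N (sync ks is x) - meanM N x)
      = (\<Sum>p<?k. \<Sum>is\<in>?T. x (is ! bstart ks p) - x (is ! p)) / real N"
    by (simp add: meanM_sync_diff sum_divide_distrib[symmetric] sum.swap[of _ ?T])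
  also have "\<dots> = 0"
  proof -
    have "(\<Sum>is\<in>?T. x (is ! bstart ks p) - x (is ! p)) = 0" if "p < ?k" for p
      using that bstart_le[of ks p] sum_tuples_nth_indep[of "bstart ks p" ?k p x N]
      by (simp add: sum_subtractf)
    then show ?thesis by simp
  qed
  finally show ?thesis .
qed

lemma meanM_update_add:
  assumes "i \<in> {1..N}"
  shows "meanM N (x(i := x i + z)) = meanM N x + z / real N"
proof -
  have "(\<Sum>m = 1..N. (x(i := x i + z)) m) = (\<Sum>m = 1..N. x m + (if m = i then z else 0))"
    by (rule sum.cong) auto
  also have "\<dots> = (\<Sum>m = 1..N. x m) + z"
    using assms by (simp add: sum.distrib)
  finally show ?thesis by (simp add: meanM_def add_divide_distrib)
qed

lemma gen_meanM_add_const: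
  assumes "0 < N"
  shows "gen \<alpha> \<delta> \<rho> ks N (\<lambda>x. meanM N x + c) x = \<alpha> * (\<integral>z. z \<partial>\<rho>)"
proof -
  have "gen0 \<alpha> \<rho> N (\<lambda>x. meanM N x + c) x = \<alpha> * (\<Sum>i = 1..N. (\<integral>z. z \<partial>\<rho>) / real N)"
    unfolding gen0_def by (simp add: meanM_update_add integral_divide_zero)
  also have "\<dots> = \<alpha> * (\<integral>z. z \<partial>\<rho>)" using assms by simp
  moreover have "gens \<delta> ks N (\<lambda>x. meanM N x + c) x = 0"
    using sum_tuples_meanM_sync_diff[of N ks x] by (simp add: gens_def)
  ultimately show ?thesis by (simp add: gen_def)
qed

lemma funpow_stepK_meanM:
  assumes "0 < N"
  shows "(stepK \<alpha> \<delta> \<rho> ks N ^^ n) (meanM N)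
     = (\<lambda>x. meanM N x + real n * (\<alpha> * (\<integral>z. z \<partial>\<rho>) / unif_rate \<alpha> \<delta> N))"
proof (induction n)
  case 0
  then show ?case by simp
next
  case (Suc n)
  then show ?case
    by (simp add: stepK_def gen_meanM_add_const[OF assms] algebra_simps add_divide_distrib)
qed

lemma poisson_weights_sums: "(\<lambda>n. exp (- y) * y ^ n / fact n) sums (1 :: real)"
proof -
  have "(\<lambda>n. y ^ n / fact n) sums exp y"
    using exp_converges[of y] by (simp add: scaleR_conv_of_real divide_inverse_commute)
  from sums_mult[OF this, of "exp (- y)"] show ?thesis
    by (simp add: mult_exp_exp)
qed

lemma poisson_mean_sums: "(\<lambda>n. exp (- y) * y ^ n / fact n * real n) sums (y :: real)"
proof -
  let ?f = "\<lambda>n. exp (- y) * y ^ n / fact n * real n"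
  have "(\<lambda>n. ?f (Suc n)) = (\<lambda>n. y * (exp (- y) * y ^ n / fact n))"
    by (simp add: fun_eq_iff field_simps del: of_nat_Suc)
  then have "(\<lambda>n. ?f (Suc n)) sums y"
    using sums_mult[OF poisson_weights_sums[of y], of y] by simp
  then show ?thesis
    by (subst (asm) sums_Suc_iff) simp
qed

lemma semigroup_meanM:
  assumes "0 < N" "0 < \<alpha>" "0 < \<delta>"
  shows "semigroup \<alpha> \<delta> \<rho> ks N t (meanM N) x = meanM N x + \<alpha> * (\<integral>z. z \<partial>\<rho>) * t"
proof -
  define r where "r = unif_rate \<alpha> \<delta> N"
  have "0 < \<alpha> * real N" using assms by simp
  then have "r \<noteq> 0" unfolding r_def unif_rate_def using assms(3) by linarith
  define d where "d = \<alpha> * (\<integral>z. z \<partial>\<rho>) / r"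
  let ?w = "\<lambda>n. exp (- (r * t)) * (r * t) ^ n / fact n"
  have "(\<lambda>n. ?w n * meanM N x + d * (?w n * real n)) sums (1 * meanM N x + d * (r * t))"
    by (intro sums_add sums_mult sums_mult2 poisson_weights_sums poisson_mean_sums)
  moreover have "d * (r * t) = \<alpha> * (\<integral>z. z \<partial>\<rho>) * t"
    using \<open>r \<noteq> 0\<close> by (simp add: d_def)
  moreover have "(\<lambda>n. ?w n * (meanM N x + real n * d)) = (\<lambda>n. ?w n * meanM N x + d * (?w n * real n))"
    by (simp add: fun_eq_iff algebra_simps add_divide_distrib)
  ultimately have "(\<lambda>n. ?w n * (meanM N x + real n * d)) sums (meanM N x + \<alpha> * (\<integral>z. z \<partial>\<rho>) * t)"
    by simp
  then show ?thesis
    by (simp add: semigroup_def funpow_stepK_meanM[OF assms(1)] sums_iff r_def d_def)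
qed

lemma meanproc_diff:
  assumes "0 < N" "0 < \<alpha>" "0 < \<delta>" "prob_space \<mu>" "integrable \<mu> (meanM N)"
  shows "meanproc \<alpha> \<delta> \<rho> ks \<mu> N t - meanproc \<alpha> \<delta> \<rho> ks \<mu> N 0 = \<alpha> * (\<integral>z. z \<partial>\<rho>) * t"
proof -
  interpret prob_space \<mu> by fact
  have "meanproc \<alpha> \<delta> \<rho> ks \<mu> N s = (\<integral>x. meanM N x \<partial>\<mu>) + \<alpha> * (\<integral>z. z \<partial>\<rho>) * s" for s
    using assms(5)
    by (simp add: meanproc_def semigroup_meanM[OF assms(1-3)] prob_space)
  then show ?thesis by simp
qed

theorem theorem1:
  fixes \<alpha> \<delta> :: real and \<rho> :: "real measure" and ks :: "nat list"
    and mu0 :: "nat \<Rightarrow> (nat \<Rightarrow> real) measure"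
  assumes ks_ne: "ks \<noteq> []" and ks_ge: "\<forall>c \<in> set ks. c \<ge> 2"
    and \<alpha>_pos: "\<alpha> > 0" and \<delta>_pos: "\<delta> > 0"
    and \<rho>_prob: "prob_space \<rho>" and \<rho>_borel: "sets \<rho> = sets borel"
    and \<rho>_cpt: "\<exists>K. compact K \<and> measure \<rho> (UNIV - K) = 0"
    and b2_pos: "(\<integral>z. z\<^sup>2 \<partial>\<rho>) > 0"
    and mu0_prob: "\<forall>N \<ge> sum_list ks. prob_space (mu0 N)"
    and mu0_sets: "\<forall>N \<ge> sum_list ks. sets (mu0 N) = sets (PiM {1..N} (\<lambda>_. borel))"
    and mu0_int: "\<forall>N \<ge> sum_list ks. integrable (mu0 N) (meanM N)"
  shows "(\<forall>t > 0. ((\<lambda>N. (meanproc \<alpha> \<delta> \<rho> ks (mu0 N) N t - meanproc \<alpha> \<delta> \<rho> ks (mu0 N) N 0) / t)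
            \<longlongrightarrow> \<alpha> * (\<integral>z. z \<partial>\<rho>)) sequentially)
       \<and> (\<forall>T :: nat \<Rightarrow> real. filterlim T at_top sequentially \<longrightarrow>
            ((\<lambda>N. (meanproc \<alpha> \<delta> \<rho> ks (mu0 N) N (T N) - meanproc \<alpha> \<delta> \<rho> ks (mu0 N) N 0) / T N)
              \<longlongrightarrow> \<alpha> * (\<integral>z. z \<partial>\<rho>)) sequentially)"
proof -
  \<comment> \<open>The increment is exactly linear in \<open>t\<close>.\<close>
  let ?a = "\<alpha> * (\<integral>z. z \<partial>\<rho>)"
  have "sum_list ks > 0" using ks_ne ks_ge by (cases ks) auto
  then have exact: "(meanproc \<alpha> \<delta> \<rho> ks (mu0 N) N t - meanproc \<alpha> \<delta> \<rho> ks (mu0 N) N 0) / t = ?a"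
    if "N \<ge> sum_list ks" "t \<noteq> 0" for N t
    using that meanproc_diff[of N \<alpha> \<delta> "mu0 N" \<rho> ks t] \<alpha>_pos \<delta>_pos mu0_prob mu0_int by simp
  show ?thesis
  proof (intro conjI allI impI)
    fix t :: real assume "t > 0"
    have "eventually (\<lambda>N. (meanproc \<alpha> \<delta> \<rho> ks (mu0 N) N t - meanproc \<alpha> \<delta> \<rho> ks (mu0 N) N 0) / t = ?a)
        sequentially"
      using eventually_ge_at_top[of "sum_list ks"] by (rule eventually_mono) (use \<open>t > 0\<close> in \<open>simp add: exact\<close>)
    then show "((\<lambda>N. (meanproc \<alpha> \<delta> \<rho> ks (mu0 N) N t - meanproc \<alpha> \<delta> \<rho> ks (mu0 N) N 0) / t)
        \<longlongrightarrow> ?a) sequentially"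
      by (rule tendsto_eventually)
  next
    fix T :: "nat \<Rightarrow> real" assume "filterlim T at_top sequentially"
    then have "eventually (\<lambda>N. T N > 0) sequentially"
      by (simp add: filterlim_at_top_dense)
    then have "eventually (\<lambda>N. (meanproc \<alpha> \<delta> \<rho> ks (mu0 N) N (T N) - meanproc \<alpha> \<delta> \<rho> ks (mu0 N) N 0) / T N = ?a)
        sequentially"
      using eventually_ge_at_top[of "sum_list ks"] by eventually_elim (simp add: exact)
    then show "((\<lambda>N. (meanproc \<alpha> \<delta> \<rho> ks (mu0 N) N (T N) - meanproc \<alpha> \<delta> \<rho> ks (mu0 N) N 0) / T N)
        \<longlongrightarrow> ?a) sequentially"
      by (rule tendsto_eventually)
  qed
qed

end
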